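(* Let $\mathbb{X}$ be a restriction category. Then $\mathbb{X}$ admits a restriction terminal object if and only if $\mathbf{L}[\mathbb{X}]$ admits a local terminal object. Moreover, $\mathbb{X}$ admits restriction products (of every pair of objects) if and only if $\mathbf{L}[\mathbb{X}]$ admits local products (of every pair of objects).
   Context: Composition is diagrammatic. A restriction category is a category with an assignment to each $f:A\to B$ of $\bar f:A\to A$ such that $\bar ff=f$; $\bar f\bar g=\bar g\bar f$ and $\bar g\bar f=\overline{\bar gf}$ for $f:A\to B$, $g:A\to C$; $f\bar g=\overline{fg}f$ for $f:A\to B$, $g:B\to C$. $f$ is total if $\bar f=\mathrm{id}$. A restriction terminal object is an object $*$ such that each object $A$ has a unique total morphism $!_A:A\to *$ and $f!_B=\bar f!_A$ for every $f:A\to B$. A restriction product of $A$ and $B$ is an object $A\times B$ with total morphisms $\pi_A:A\times B\to A$, $\pi_B:A\times B\to B$ such that for all $f:C\to A$, $g:C\to B$ there is a unique $\langle f,g\rangle:C\to A\times B$ with $\langle f,g\rangle\pi_A=\bar gf$ and $\langle f,g\rangle\pi_B=\bar fg$. $\mathbf{L}[\mathbb{X}]$: objects $(A,a)$ with $a=\bar a:A\to A$; morphisms $f:(A,a)\to(B,b)$ are $f:A\to B$ with $\bar f=a$, $fb=f$; identity $a$; composition as in $\mathbb{X}$; it is a local category with $\mathsf{L}(A,a)=(A,\mathrm{id}_A)$ and $\eta_{(A,a)}=a$. In a local category (a category with objects $\mathsf{L}M$ and morphisms $\eta_M:M\to\mathsf{L}M$ satisfying the local category axioms), an object $M$ is total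 if $M=\mathsf{L}M$ and $\eta_M=\mathrm{id}_M$. A local terminal object is a total object which is terminal. A local product of $M$ and $N$ is a product $M\times N$ (with projections) in the category such that the product $\mathsf{L}M\times\mathsf{L}N$ exists, $\mathsf{L}M\times\mathsf{L}N=\mathsf{L}(M\times N)$, and $\eta_{M\times N}=\eta_M\times\eta_N$. *)

theory Defs
  imports Main
begin

record ('o, 'm) cat =
  Obj :: "'o set"
  Arr :: "'m set"
  dom :: "'m \<Rightarrow> 'o"
  cod :: "'m \<Rightarrow> 'o"
  idm :: "'o \<Rightarrow> 'm"
  cmp :: "'m \<Rightarrow> 'm \<Rightarrow> 'm"   (* cmp f g = f ; g  (first f, then g) *)

definition hom :: "('o, 'm, 'x) cat_scheme \<Rightarrow> 'o \<Rightarrow> 'o \<Rightarrow> 'm set" where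
  "hom C A B = {f \<in> Arr C. dom C f = A \<and> cod C f = B}"

definition category :: "('o, 'm, 'x) cat_scheme \<Rightarrow> bool" where
  "category C \<longleftrightarrow>
     (\<forall>f \<in> Arr C. dom C f \<in> Obj C \<and> cod C f \<in> Obj C) \<and>
     (\<forall>A \<in> Obj C. idm C A \<in> hom C A A) \<and>
     (\<forall>f \<in> Arr C. \<forall>g \<in> Arr C. cod C f = dom C g \<longrightarrow>
         cmp C f g \<in> hom C (dom C f) (cod C g)) \<and>
     (\<forall>f \<in> Arr C. \<forall>g \<in> Arr C. \<forall>h \<in> Arr C. cod C f = dom C g \<longrightarrow> cod C g = dom C h \<longrightarrow>
         cmp C (cmp C f g) h = cmp C f (cmp C g h)) \<and>
     (\<forall>f \<in> Arr C. cmp C (idm C (dom C f)) f = f \<and> cmp C f (idm C (cod C f)) = f)"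

record ('o, 'm) rcat = "('o, 'm) cat" +
  rst :: "'m \<Rightarrow> 'm"

definition restriction_category :: "('o, 'm) rcat \<Rightarrow> bool" where
  "restriction_category X \<longleftrightarrow> category X \<and>
     (\<forall>f \<in> Arr X. rst X f \<in> hom X (dom X f) (dom X f)) \<and>
     (\<forall>f \<in> Arr X. cmp X (rst X f) f = f) \<and>
     (\<forall>f \<in> Arr X. \<forall>g \<in> Arr X. dom X f = dom X g \<longrightarrow>
         cmp X (rst X f) (rst X g) = cmp X (rst X g) (rst X f) \<and>
         cmp X (rst X g) (rst X f) = rst X (cmp X (rst X g) f)) \<and>
     (\<forall>f \<in> Arr X. \<forall>g \<in> Arr X. cod X f = dom X g \<longrightarrow>
         cmp X f (rst X g) = cmp X (rst X (cmp X f g)) f)"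

definition total :: "('o, 'm) rcat \<Rightarrow> 'm \<Rightarrow> bool" where
  "total X f \<longleftrightarrow> rst X f = idm X (dom X f)"

definition restriction_terminal :: "('o, 'm) rcat \<Rightarrow> 'o \<Rightarrow> bool" where
  "restriction_terminal X T \<longleftrightarrow> T \<in> Obj X \<and>
     (\<forall>A \<in> Obj X. \<exists>!t. t \<in> hom X A T \<and> total X t) \<and>
     (\<forall>A \<in> Obj X. \<forall>B \<in> Obj X. \<forall>f \<in> hom X A B. \<forall>tA tB.
        tA \<in> hom X A T \<and> total X tA \<longrightarrow> tB \<in> hom X B T \<and> total X tB \<longrightarrow>
        cmp X f tB = cmp X (rst X f) tA)"

definition has_restriction_terminal :: "('o, 'm) rcat \<Rightarrow> bool" where
  "has_restriction_terminal X \<longleftrightarrow> (\<exists>T. restriction_terminal X T)"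

definition restriction_product ::
  "('o, 'm) rcat \<Rightarrow> 'o \<Rightarrow> 'o \<Rightarrow> 'o \<Rightarrow> 'm \<Rightarrow> 'm \<Rightarrow> bool" where
  "restriction_product X A B P pA pB \<longleftrightarrow> P \<in> Obj X \<and>
     pA \<in> hom X P A \<and> total X pA \<and> pB \<in> hom X P B \<and> total X pB \<and>
     (\<forall>C \<in> Obj X. \<forall>f \<in> hom X C A. \<forall>g \<in> hom X C B.
        \<exists>!h. h \<in> hom X C P \<and> cmp X h pA = cmp X (rst X g) f \<and> cmp X h pB = cmp X (rst X f) g)"

definition has_restriction_products :: "('o, 'm) rcat \<Rightarrow> bool" where
  "has_restriction_products X \<longleftrightarrow>
     (\<forall>A \<in> Obj X. \<forall>B \<in> Obj X. \<exists>P pA pB. restriction_product X A B P pA pB)"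

definition terminal :: "('o, 'm, 'x) cat_scheme \<Rightarrow> 'o \<Rightarrow> bool" where
  "terminal C T \<longleftrightarrow> T \<in> Obj C \<and> (\<forall>A \<in> Obj C. \<exists>!t. t \<in> hom C A T)"

definition product ::
  "('o, 'm, 'x) cat_scheme \<Rightarrow> 'o \<Rightarrow> 'o \<Rightarrow> 'o \<Rightarrow> 'm \<Rightarrow> 'm \<Rightarrow> bool" where
  "product C M N P p1 p2 \<longleftrightarrow> P \<in> Obj C \<and> p1 \<in> hom C P M \<and> p2 \<in> hom C P N \<and>
     (\<forall>Z \<in> Obj C. \<forall>f \<in> hom C Z M. \<forall>g \<in> hom C Z N.
        \<exists>!h. h \<in> hom C Z P \<and> cmp C h p1 = f \<and> cmp C h p2 = g)"

definition total_obj :: "('o, 'm, 'x) cat_scheme \<Rightarrow> ('o \<Rightarrow> 'o) \<Rightarrow> ('o \<Rightarrow> 'm) \<Rightarrow> 'o \<Rightarrow> bool" where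
  "total_obj C L eta M \<longleftrightarrow> L M = M \<and> eta M = idm C M"

definition local_terminal ::
  "('o, 'm, 'x) cat_scheme \<Rightarrow> ('o \<Rightarrow> 'o) \<Rightarrow> ('o \<Rightarrow> 'm) \<Rightarrow> 'o \<Rightarrow> bool" where
  "local_terminal C L eta T \<longleftrightarrow> total_obj C L eta T \<and> terminal C T"

text \<open>A local product of M and N: a product (P,p1,p2) such that L P, with some
  projections q1, q2, is a product of L M and L N, and eta P is the induced map
  eta M \<times> eta N, i.e. eta P ; q1 = p1 ; eta M and eta P ; q2 = p2 ; eta N.\<close>
definition local_product ::
  "('o, 'm, 'x) cat_scheme \<Rightarrow> ('o \<Rightarrow> 'o) \<Rightarrow> ('o \<Rightarrow> 'm) \<Rightarrow> 'o \<Rightarrow> 'o \<Rightarrow> 'o \<Rightarrow> 'm \<Rightarrow> 'm \<Rightarrow> bool" where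
  "local_product C L eta M N P p1 p2 \<longleftrightarrow> product C M N P p1 p2 \<and>
     (\<exists>q1 q2. product C (L M) (L N) (L P) q1 q2 \<and>
        cmp C (eta P) q1 = cmp C p1 (eta M) \<and> cmp C (eta P) q2 = cmp C p2 (eta N))"

definition has_local_terminal ::
  "('o, 'm, 'x) cat_scheme \<Rightarrow> ('o \<Rightarrow> 'o) \<Rightarrow> ('o \<Rightarrow> 'm) \<Rightarrow> bool" where
  "has_local_terminal C L eta \<longleftrightarrow> (\<exists>T. local_terminal C L eta T)"

definition has_local_products ::
  "('o, 'm, 'x) cat_scheme \<Rightarrow> ('o \<Rightarrow> 'o) \<Rightarrow> ('o \<Rightarrow> 'm) \<Rightarrow> bool" where
  "has_local_products C L eta \<longleftrightarrow>
     (\<forall>M \<in> Obj C. \<forall>N \<in> Obj C. \<exists>P p1 p2. local_product C L eta M N P p1 p2)"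

text \<open>Objects are pairs (A,a) with a a restriction idempotent on A. A morphism
  f : (A,a) \<rightarrow> (B,b) is represented as the triple ((A,a), f, (B,b)).\<close>

definition Lcat :: "('o, 'm) rcat \<Rightarrow> ('o \<times> 'm, ('o \<times> 'm) \<times> 'm \<times> ('o \<times> 'm)) cat" where
  "Lcat X = \<lparr>
     Obj = {(A, a). A \<in> Obj X \<and> a \<in> hom X A A \<and> rst X a = a},
     Arr = {((A, a), f, (B, b)). (A, a) \<in> {(A, a). A \<in> Obj X \<and> a \<in> hom X A A \<and> rst X a = a}
                \<and> (B, b) \<in> {(A, a). A \<in> Obj X \<and> a \<in> hom X A A \<and> rst X a = a}
                \<and> f \<in> hom X A B \<and> rst X f = a \<and> cmp X f b = f},
     dom = (\<lambda>(D, f, E). D),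
     cod = (\<lambda>(D, f, E). E),
     idm = (\<lambda>(A, a). ((A, a), a, (A, a))),
     cmp = (\<lambda>(D, f, E) (E', g, F). (D, cmp X f g, F)) \<rparr>"

definition Lobj :: "('o, 'm) rcat \<Rightarrow> 'o \<times> 'm \<Rightarrow> 'o \<times> 'm" where
  "Lobj X = (\<lambda>(A, a). (A, idm X A))"

definition Leta :: "('o, 'm) rcat \<Rightarrow> 'o \<times> 'm \<Rightarrow> ('o \<times> 'm) \<times> 'm \<times> ('o \<times> 'm)" where
  "Leta X = (\<lambda>(A, a). ((A, a), a, (A, idm X A)))"

end

theory Submission
  imports Defs
begin

text \<open>A map \<open>(A, e) \<rightarrow> (T, 1)\<close> of \<open>L[X]\<close> is just a map \<open>A \<rightarrow> T\<close> of \<open>X\<close> with restriction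
  \<open>e\<close>, and the total objects of \<open>L[X]\<close> are the \<open>(T, 1)\<close>. So \<open>L[X]\<close> has a local terminal
  object iff some \<open>T\<close> admits, for every restriction idempotent \<open>e\<close> on \<open>A\<close>, exactly one
  map \<open>A \<rightarrow> T\<close> with restriction \<open>e\<close>; that map is \<open>e \<cdot> !\<^sub>A\<close>, and this property is
  equivalent to \<open>T\<close> being restriction terminal.

  For products, if \<open>A \<times> B\<close> is a restriction product then the product of \<open>(A, a)\<close> and
  \<open>(B, b)\<close> in \<open>L[X]\<close> is \<open>(A \<times> B, e)\<close>, where \<open>e\<close> is the restriction of \<open>a \<times> b\<close>, with the
  projections restricted to \<open>e\<close>; for \<open>a = b = 1\<close> this is \<open>(A \<times> B, 1)\<close>, which gives the
  compatibility with \<open>L\<close> and \<open>\<eta>\<close>. Conversely, a product \<open>(P, 1)\<close> of \<open>(A, 1)\<close> and \<open>(B, 1)\<close>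
  in \<open>L[X]\<close> is a restriction product in \<open>X\<close>: a pair \<open>f, g\<close> out of \<open>C\<close> becomes, after
  restricting both to \<open>R f \<cdot> R g\<close>, a pair of maps of \<open>L[X]\<close> out of \<open>(C, R f \<cdot> R g)\<close>, and
  every candidate pairing has exactly that restriction because the projections are total.\<close>

locale restriction_cat =
  fixes X :: "('o, 'm) rcat"
  assumes restriction_category: "restriction_category X"
begin

abbreviation rcomp (infixl "\<cdot>" 70) where "f \<cdot> g \<equiv> cmp X f g"
abbreviation R where "R f \<equiv> rst X f"

lemma category: "category X"
  using restriction_category unfolding restriction_category_def by blast

lemma comp_in_hom: "f \<in> hom X A B \<Longrightarrow> g \<in> hom X B C \<Longrightarrow> f \<cdot> g \<in> hom X A C"
  using category unfolding category_def hom_def by auto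

lemma comp_assoc:
  "f \<in> hom X A B \<Longrightarrow> g \<in> hom X B C \<Longrightarrow> h \<in> hom X C D \<Longrightarrow> f \<cdot> g \<cdot> h = f \<cdot> (g \<cdot> h)"
  using category unfolding category_def hom_def by auto

lemma idm_in_hom: "A \<in> Obj X \<Longrightarrow> idm X A \<in> hom X A A"
  using category unfolding category_def by auto

lemma hom_dom_in_Obj: "f \<in> hom X A B \<Longrightarrow> A \<in> Obj X"
  using category unfolding category_def hom_def by auto

lemma hom_cod_in_Obj: "f \<in> hom X A B \<Longrightarrow> B \<in> Obj X"
  using category unfolding category_def hom_def by auto

lemma comp_idm_left: "f \<in> hom X A B \<Longrightarrow> idm X A \<cdot> f = f"
  using category unfolding category_def hom_def by auto

lemma comp_idm_right: "f \<in> hom X A B \<Longrightarrow> f \<cdot> idm X B = f"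
  using category unfolding category_def hom_def by auto

lemma rst_in_hom: "f \<in> hom X A B \<Longrightarrow> R f \<in> hom X A A"
  using restriction_category unfolding restriction_category_def hom_def by auto

lemma rst_comp_self: "f \<in> hom X A B \<Longrightarrow> R f \<cdot> f = f"
  using restriction_category unfolding restriction_category_def hom_def by auto

lemma rst_commute: "f \<in> hom X A B \<Longrightarrow> g \<in> hom X A C \<Longrightarrow> R f \<cdot> R g = R g \<cdot> R f"
  using restriction_category unfolding restriction_category_def hom_def by auto

lemma rst_rst_comp: "f \<in> hom X A B \<Longrightarrow> g \<in> hom X A C \<Longrightarrow> R (R g \<cdot> f) = R g \<cdot> R f"
  using restriction_category unfolding restriction_category_def hom_def by auto

lemma comp_rst: "f \<in> hom X A B \<Longrightarrow> g \<in> hom X B C \<Longrightarrow> f \<cdot> R g = R (f \<cdot> g) \<cdot> f"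
  using restriction_category unfolding restriction_category_def hom_def by auto

lemma rst_idm: "A \<in> Obj X \<Longrightarrow> R (idm X A) = idm X A"
  by (metis comp_idm_right idm_in_hom rst_comp_self rst_in_hom)

lemma rst_rst: "f \<in> hom X A B \<Longrightarrow> R (R f) = R f"
  by (metis comp_idm_right hom_dom_in_Obj idm_in_hom rst_idm rst_in_hom rst_rst_comp)

lemma rst_idem: "f \<in> hom X A B \<Longrightarrow> R f \<cdot> R f = R f"
  by (metis rst_comp_self rst_in_hom rst_rst)

lemma total_iff: "f \<in> hom X A B \<Longrightarrow> total X f \<longleftrightarrow> R f = idm X A"
  by (simp add: total_def hom_def)

lemma rst_comp_total:
  assumes f: "f \<in> hom X A B" and g: "g \<in> hom X B C" and g_total: "R g = idm X B"
  shows "R (f \<cdot> g) = R f"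
proof -
  have fg: "f \<cdot> g \<in> hom X A C"
    using f g by (rule comp_in_hom)
  have "R f = R (R (f \<cdot> g) \<cdot> f)"
    using comp_rst[OF f g] g_total comp_idm_right[OF f] by simp
  also have "\<dots> = R (f \<cdot> g) \<cdot> R f"
    using rst_rst_comp[OF f fg] .
  also have "\<dots> = R (R f \<cdot> (f \<cdot> g))"
    using rst_rst_comp[OF fg f] rst_commute[OF f fg] by simp
  also have "R f \<cdot> (f \<cdot> g) = f \<cdot> g"
    using comp_assoc[OF rst_in_hom[OF f] f g] rst_comp_self[OF f] by simp
  finally show ?thesis ..
qed

lemma comp_rst_absorb:
  assumes h: "h \<in> hom X A B" and q: "q \<in> hom X B C" and "R (h \<cdot> q) = R h"
  shows "h \<cdot> R q = h"
  using comp_rst[OF h q] assms(3) rst_comp_self[OF h] by simp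

definition restriction_idem :: "'o \<Rightarrow> 'm \<Rightarrow> bool" where
  "restriction_idem A e \<longleftrightarrow> e \<in> hom X A A \<and> R e = e"

lemma restriction_idem_idm: "A \<in> Obj X \<Longrightarrow> restriction_idem A (idm X A)"
  by (simp add: restriction_idem_def idm_in_hom rst_idm)

lemma restriction_idem_rst: "f \<in> hom X A B \<Longrightarrow> restriction_idem A (R f)"
  by (simp add: restriction_idem_def rst_in_hom rst_rst)

lemma Obj_Lcat_iff: "(A, a) \<in> Obj (Lcat X) \<longleftrightarrow> restriction_idem A a"
  unfolding restriction_idem_def by (auto simp: Lcat_def dest: hom_dom_in_Obj)

lemma dom_Lcat: "dom (Lcat X) (D, f, E) = D"
  by (simp add: Lcat_def)

lemma cod_Lcat: "cod (Lcat X) (D, f, E) = E"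
  by (simp add: Lcat_def)

lemma Arr_Lcat:
  "Arr (Lcat X) = {((A, a), f, (B, b)). restriction_idem A a \<and> restriction_idem B b \<and>
     f \<in> hom X A B \<and> R f = a \<and> f \<cdot> b = f}"
  unfolding restriction_idem_def by (auto simp: Lcat_def dest: hom_dom_in_Obj)

lemma hom_Lcat_iff:
  "t \<in> hom (Lcat X) (A, a) (B, b) \<longleftrightarrow>
     (\<exists>f. t = ((A, a), f, (B, b)) \<and> restriction_idem B b \<and> f \<in> hom X A B \<and> R f = a \<and> f \<cdot> b = f)"
  using restriction_idem_rst by (auto simp: hom_def[of "Lcat X"] Arr_Lcat dom_Lcat cod_Lcat)

lemma hom_Lcat_total_cod_iff:
  assumes "B \<in> Obj X"
  shows "t \<in> hom (Lcat X) (A, a) (B, idm X B) \<longleftrightarrow>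
     (\<exists>f. t = ((A, a), f, (B, idm X B)) \<and> f \<in> hom X A B \<and> R f = a)"
  using assms by (auto simp: hom_Lcat_iff restriction_idem_idm comp_idm_right)

lemma ex1_hom_Lcat_total_cod_iff:
  assumes "B \<in> Obj X"
  shows "(\<exists>!t. t \<in> hom (Lcat X) (A, a) (B, idm X B) \<and> Q t) \<longleftrightarrow>
    (\<exists>!f. f \<in> hom X A B \<and> R f = a \<and> Q ((A, a), f, (B, idm X B)))"
  unfolding hom_Lcat_total_cod_iff[OF assms] by blast

lemma cmp_Lcat [simp]: "cmp (Lcat X) (D, f, E) (E', g, F) = (D, f \<cdot> g, F)"
  by (simp add: Lcat_def)

lemma Lobj_Pair [simp]: "Lobj X (A, a) = (A, idm X A)"
  by (simp add: Lobj_def)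

lemma Leta_Pair [simp]: "Leta X (A, a) = ((A, a), a, (A, idm X A))"
  by (simp add: Leta_def)

lemma total_obj_Lcat_iff: "total_obj (Lcat X) (Lobj X) (Leta X) (A, a) \<longleftrightarrow> a = idm X A"
  by (simp add: total_obj_def Lobj_def Leta_def Lcat_def eq_commute)

text \<open>Being restriction terminal in \<open>X\<close> and being terminal of the form \<open>(T, 1)\<close> in
  \<open>L[X]\<close> both amount to this.\<close>
definition classifies_restrictions :: "'o \<Rightarrow> bool" where
  "classifies_restrictions T \<longleftrightarrow> T \<in> Obj X \<and>
     (\<forall>A e. restriction_idem A e \<longrightarrow> (\<exists>!f. f \<in> hom X A T \<and> R f = e))"

lemma restriction_terminal_iff_classifies_restrictions:
  "restriction_terminal X T \<longleftrightarrow> classifies_restrictions T"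
proof
  assume T: "restriction_terminal X T"
  then have T_Obj: "T \<in> Obj X" and
    total_unique: "\<And>A. A \<in> Obj X \<Longrightarrow> \<exists>!t. t \<in> hom X A T \<and> total X t" and
    natural: "\<And>A B f tA tB. \<lbrakk>A \<in> Obj X; B \<in> Obj X; f \<in> hom X A B;
      tA \<in> hom X A T; total X tA; tB \<in> hom X B T; total X tB\<rbrakk> \<Longrightarrow> f \<cdot> tB = R f \<cdot> tA"
    unfolding restriction_terminal_def by blast+
  have "\<exists>!f. f \<in> hom X A T \<and> R f = e" if e: "restriction_idem A e" for A e
  proof -
    have e_hom: "e \<in> hom X A A" and Re: "R e = e"
      using e by (auto simp: restriction_idem_def)
    have A: "A \<in> Obj X"
      using e_hom by (rule hom_dom_in_Obj)
    obtain t where t: "t \<in> hom X A T" "R t = idm X A"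
      using total_unique[OF A] total_iff by blast
    show ?thesis
    proof
      show "e \<cdot> t \<in> hom X A T \<and> R (e \<cdot> t) = e"
        using comp_in_hom[OF e_hom t(1)] rst_rst_comp[OF t(1) e_hom] Re t(2) comp_idm_right[OF e_hom]
        by simp
      fix f assume f: "f \<in> hom X A T \<and> R f = e"
      then have "f \<cdot> idm X T = R f \<cdot> t"
        using natural[OF A T_Obj _ t(1) _ idm_in_hom[OF T_Obj]] t total_iff idm_in_hom rst_idm T_Obj
        by blast
      then show "f = e \<cdot> t"
        using f comp_idm_right by auto
    qed
  qed
  then show "classifies_restrictions T"
    unfolding classifies_restrictions_def using T_Obj by blast
next
  assume "classifies_restrictions T"
  then have T_Obj: "T \<in> Obj X" and
    unique: "\<And>A e. restriction_idem A e \<Longrightarrow> \<exists>!f. f \<in> hom X A T \<and> R f = e"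
    unfolding classifies_restrictions_def by blast+
  have "\<exists>!t. t \<in> hom X A T \<and> total X t" if "A \<in> Obj X" for A
  proof -
    have "t \<in> hom X A T \<and> total X t \<longleftrightarrow> t \<in> hom X A T \<and> R t = idm X A" for t
      using total_iff by blast
    then show ?thesis
      using unique[OF restriction_idem_idm[OF that]] by simp
  qed
  moreover have "f \<cdot> tB = R f \<cdot> tA"
    if f: "f \<in> hom X A B" and tA: "tA \<in> hom X A T" "total X tA"
      and tB: "tB \<in> hom X B T" "total X tB" for A B f tA tB
  proof -
    have Rf: "R f \<in> hom X A A"
      using f by (rule rst_in_hom)
    have "R (f \<cdot> tB) = R f"
      using rst_comp_total[OF f tB(1)] tB total_iff by blast
    moreover have "R (R f \<cdot> tA) = R f"
      using rst_rst_comp[OF tA(1) f] tA total_iff comp_idm_right[OF Rf] by simp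
    ultimately show ?thesis
      using unique[OF restriction_idem_rst[OF f]] comp_in_hom[OF f tB(1)] comp_in_hom[OF Rf tA(1)]
      by blast
  qed
  ultimately show "restriction_terminal X T"
    unfolding restriction_terminal_def using T_Obj by blast
qed

lemma terminal_Lcat_iff_classifies_restrictions:
  "terminal (Lcat X) (T, idm X T) \<longleftrightarrow> classifies_restrictions T"
proof (cases "T \<in> Obj X")
  case True
  have "(\<exists>!t. t \<in> hom (Lcat X) (A, e) (T, idm X T)) \<longleftrightarrow> (\<exists>!f. f \<in> hom X A T \<and> R f = e)" for A e
    using ex1_hom_Lcat_total_cod_iff[OF True, where Q = "\<lambda>_. True"] by simp
  then show ?thesis
    unfolding terminal_def classifies_restrictions_def Ball_def split_paired_All Obj_Lcat_iff
    using True restriction_idem_idm by simp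
next
  case False
  then show ?thesis
    unfolding terminal_def classifies_restrictions_def Obj_Lcat_iff restriction_idem_def
    using hom_dom_in_Obj by blast
qed

lemma has_restriction_terminal_iff_has_local_terminal:
  "has_restriction_terminal X \<longleftrightarrow> has_local_terminal (Lcat X) (Lobj X) (Leta X)"
proof -
  have "has_local_terminal (Lcat X) (Lobj X) (Leta X) \<longleftrightarrow> (\<exists>T. terminal (Lcat X) (T, idm X T))"
    unfolding has_local_terminal_def local_terminal_def by (auto simp: total_obj_Lcat_iff)
  then show ?thesis
    by (auto simp: has_restriction_terminal_def restriction_terminal_iff_classifies_restrictions
        terminal_Lcat_iff_classifies_restrictions)
qed

lemma restriction_product_pairing:
  assumes "restriction_product X A B P pA pB" and f: "f \<in> hom X C A" and g: "g \<in> hom X C B"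
    and "R f = R g"
  shows "\<exists>!h. h \<in> hom X C P \<and> h \<cdot> pA = f \<and> h \<cdot> pB = g"
proof -
  have "R g \<cdot> f = f" "R f \<cdot> g = g"
    using rst_comp_self[OF f] rst_comp_self[OF g] \<open>R f = R g\<close> by simp_all
  then show ?thesis
    using assms hom_dom_in_Obj[OF f] unfolding restriction_product_def by metis
qed

text \<open>The restriction of \<open>a \<times> b = \<langle>pA \<cdot> a, pB \<cdot> b\<rangle>\<close>: the idempotent cutting the
  product of \<open>(A, a)\<close> and \<open>(B, b)\<close> in \<open>L[X]\<close> out of \<open>A \<times> B\<close>.\<close>
definition product_idem :: "'m \<Rightarrow> 'm \<Rightarrow> 'm \<Rightarrow> 'm \<Rightarrow> 'm" where
  "product_idem pA pB a b = R (pA \<cdot> a) \<cdot> R (pB \<cdot> b)"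

lemma product_idem_idm:
  assumes "pA \<in> hom X P A" "R pA = idm X P" "pB \<in> hom X P B" "R pB = idm X P"
  shows "product_idem pA pB (idm X A) (idm X B) = idm X P"
  using assms comp_idm_right[OF assms(1)] comp_idm_right[OF assms(3)]
    comp_idm_left[OF idm_in_hom[OF hom_dom_in_Obj[OF assms(1)]]]
  unfolding product_idem_def by simp

lemma restricted_total_in_hom_Lcat:
  assumes p: "p \<in> hom X P A" "R p = idm X P" and a: "restriction_idem A a" and k: "k \<in> hom X P Q"
  defines "e \<equiv> R (p \<cdot> a) \<cdot> R k"
  shows "((P, e), e \<cdot> p, (A, a)) \<in> hom (Lcat X) (P, e) (A, a)"
proof -
  have a_hom: "a \<in> hom X A A" and Ra: "R a = a"
    using a by (auto simp: restriction_idem_def)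
  have pa: "p \<cdot> a \<in> hom X P A"
    using p(1) a_hom by (rule comp_in_hom)
  have Rpa: "R (p \<cdot> a) \<in> hom X P P"
    using pa by (rule rst_in_hom)
  have m: "R (p \<cdot> a) \<cdot> k \<in> hom X P Q"
    using Rpa k by (rule comp_in_hom)
  have e_rst: "e = R (R (p \<cdot> a) \<cdot> k)"
    unfolding e_def using rst_rst_comp[OF k pa] by simp
  have e_hom: "e \<in> hom X P P"
    unfolding e_rst using m by (rule rst_in_hom)
  have "R (e \<cdot> p) = e \<cdot> R p"
    unfolding e_rst using rst_rst_comp[OF p(1) m] .
  then have R_ep: "R (e \<cdot> p) = e"
    using p(2) comp_idm_right[OF e_hom] by simp
  have Rk: "R k \<in> hom X P P"
    using k by (rule rst_in_hom)
  have "e \<cdot> R (p \<cdot> a) = R (p \<cdot> a) \<cdot> (R k \<cdot> R (p \<cdot> a))"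
    unfolding e_def using comp_assoc[OF Rpa Rk Rpa] .
  also have "\<dots> = R (p \<cdot> a) \<cdot> R (p \<cdot> a) \<cdot> R k"
    using rst_commute[OF k pa] comp_assoc[OF Rpa Rpa Rk] by simp
  finally have e_absorbs: "e \<cdot> R (p \<cdot> a) = e"
    unfolding e_def using rst_idem[OF pa] by simp
  have "e \<cdot> p \<cdot> a = e \<cdot> (p \<cdot> R a)"
    using comp_assoc[OF e_hom p(1) a_hom] Ra by simp
  also have "\<dots> = e \<cdot> R (p \<cdot> a) \<cdot> p"
    using comp_rst[OF p(1) a_hom] comp_assoc[OF e_hom Rpa p(1)] by simp
  finally have "e \<cdot> p \<cdot> a = e \<cdot> p"
    using e_absorbs by simp
  then show ?thesis
    unfolding hom_Lcat_iff using a comp_in_hom[OF e_hom p(1)] R_ep by blast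
qed

lemma comp_product_idem:
  assumes pA: "pA \<in> hom X P A" "R pA = idm X P" and pB: "pB \<in> hom X P B" "R pB = idm X P"
    and a: "a \<in> hom X A A" and b: "b \<in> hom X B B" and h: "h \<in> hom X C P"
    and ha: "h \<cdot> pA \<cdot> a = h \<cdot> pA" and hb: "h \<cdot> pB \<cdot> b = h \<cdot> pB"
  shows "h \<cdot> product_idem pA pB a b = h"
proof -
  have absorb: "h \<cdot> R (p \<cdot> d) = h"
    if p: "p \<in> hom X P D" "R p = idm X P" and d: "d \<in> hom X D D" and hd: "h \<cdot> p \<cdot> d = h \<cdot> p"
    for p d D
  proof (rule comp_rst_absorb[OF h comp_in_hom[OF p(1) d]])
    show "R (h \<cdot> (p \<cdot> d)) = R h"
      using comp_assoc[OF h p(1) d] hd rst_comp_total[OF h p] by simp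
  qed
  have "h \<cdot> product_idem pA pB a b = h \<cdot> R (pA \<cdot> a) \<cdot> R (pB \<cdot> b)"
    unfolding product_idem_def
    using comp_assoc[OF h rst_in_hom[OF comp_in_hom[OF pA(1) a]] rst_in_hom[OF comp_in_hom[OF pB(1) b]]]
    by simp
  then show ?thesis
    using absorb[OF pA a ha] absorb[OF pB b hb] by simp
qed

lemma restriction_idem_product_idem:
  assumes "pA \<in> hom X P A" "pB \<in> hom X P B" "a \<in> hom X A A" "b \<in> hom X B B"
  shows "restriction_idem P (product_idem pA pB a b)"
proof -
  have pa: "pA \<cdot> a \<in> hom X P A" and pb: "pB \<cdot> b \<in> hom X P B"
    using assms comp_in_hom by blast+
  then have "product_idem pA pB a b = R (R (pA \<cdot> a) \<cdot> (pB \<cdot> b))"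
    unfolding product_idem_def using rst_rst_comp by simp
  then show ?thesis
    using restriction_idem_rst comp_in_hom[OF rst_in_hom[OF pa] pb] by simp
qed

lemma product_Lcat_pairing:
  assumes P: "restriction_product X A B P pA pB"
    and a: "a \<in> hom X A A" and b: "b \<in> hom X B B"
    and u: "u \<in> hom (Lcat X) (C, c) (A, a)" and v: "v \<in> hom (Lcat X) (C, c) (B, b)"
  defines "e \<equiv> product_idem pA pB a b"
  shows "\<exists>!k. k \<in> hom (Lcat X) (C, c) (P, e) \<and>
    cmp (Lcat X) k ((P, e), e \<cdot> pA, (A, a)) = u \<and> cmp (Lcat X) k ((P, e), e \<cdot> pB, (B, b)) = v"
proof -
  have pA: "pA \<in> hom X P A" "R pA = idm X P" and pB: "pB \<in> hom X P B" "R pB = idm X P"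
    using P total_iff unfolding restriction_product_def by blast+
  have e_idem: "restriction_idem P e"
    unfolding e_def using pA(1) pB(1) a b by (rule restriction_idem_product_idem)
  then have e_hom: "e \<in> hom X P P"
    by (simp add: restriction_idem_def)
  obtain f where f: "u = ((C, c), f, (A, a))" "f \<in> hom X C A" "R f = c" "f \<cdot> a = f"
    using u unfolding hom_Lcat_iff by blast
  obtain g where g: "v = ((C, c), g, (B, b))" "g \<in> hom X C B" "R g = c" "g \<cdot> b = g"
    using v unfolding hom_Lcat_iff by blast
  have pairing: "\<exists>!h. h \<in> hom X C P \<and> h \<cdot> pA = f \<and> h \<cdot> pB = g"
    using restriction_product_pairing[OF P f(2) g(2)] f(3) g(3) by simp
  then obtain h where h: "h \<in> hom X C P" "h \<cdot> pA = f" "h \<cdot> pB = g"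
    by blast
  have h_e: "h \<cdot> e = h"
    unfolding e_def using comp_product_idem[OF pA pB a b h(1)] h f(4) g(4) by simp
  have through_e: "k \<cdot> (e \<cdot> pA) = k \<cdot> pA \<and> k \<cdot> (e \<cdot> pB) = k \<cdot> pB"
    if "k \<in> hom X C P" "k \<cdot> e = k" for k
    using comp_assoc[OF that(1) e_hom pA(1)] comp_assoc[OF that(1) e_hom pB(1)] that(2) by simp
  show ?thesis
  proof
    have "((C, c), h, (P, e)) \<in> hom (Lcat X) (C, c) (P, e)"
      unfolding hom_Lcat_iff using e_idem h(1) h_e rst_comp_total[OF h(1) pA] h(2) f(3) by auto
    then show "((C, c), h, (P, e)) \<in> hom (Lcat X) (C, c) (P, e) \<and>
        cmp (Lcat X) ((C, c), h, (P, e)) ((P, e), e \<cdot> pA, (A, a)) = u \<and>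
        cmp (Lcat X) ((C, c), h, (P, e)) ((P, e), e \<cdot> pB, (B, b)) = v"
      using through_e[OF h(1) h_e] h f(1) g(1) by simp
  next
    fix k assume k: "k \<in> hom (Lcat X) (C, c) (P, e) \<and>
        cmp (Lcat X) k ((P, e), e \<cdot> pA, (A, a)) = u \<and> cmp (Lcat X) k ((P, e), e \<cdot> pB, (B, b)) = v"
    then obtain k0 where k0: "k = ((C, c), k0, (P, e))" "k0 \<in> hom X C P" "k0 \<cdot> e = k0"
      unfolding hom_Lcat_iff by blast
    then have "k0 \<cdot> pA = f" "k0 \<cdot> pB = g"
      using k through_e[OF k0(2,3)] f(1) g(1) by simp_all
    then show "k = ((C, c), h, (P, e))"
      using pairing h k0 by blast
  qed
qed

lemma product_Lcat_of_restriction_product: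
  assumes P: "restriction_product X A B P pA pB"
    and a: "restriction_idem A a" and b: "restriction_idem B b"
  defines "e \<equiv> product_idem pA pB a b"
  shows "product (Lcat X) (A, a) (B, b) (P, e) ((P, e), e \<cdot> pA, (A, a)) ((P, e), e \<cdot> pB, (B, b))"
proof -
  have pA: "pA \<in> hom X P A" "R pA = idm X P" and pB: "pB \<in> hom X P B" "R pB = idm X P"
    using P total_iff unfolding restriction_product_def by blast+
  have a_hom: "a \<in> hom X A A" and b_hom: "b \<in> hom X B B"
    using a b by (simp_all add: restriction_idem_def)
  have e_swap: "e = R (pB \<cdot> b) \<cdot> R (pA \<cdot> a)"
    unfolding e_def product_idem_def
    using rst_commute[OF comp_in_hom[OF pA(1) a_hom] comp_in_hom[OF pB(1) b_hom]] .
  have "((P, e), e \<cdot> pA, (A, a)) \<in> hom (Lcat X) (P, e) (A, a)"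
    using restricted_total_in_hom_Lcat[OF pA a comp_in_hom[OF pB(1) b_hom]]
    unfolding e_def product_idem_def .
  moreover have "((P, e), e \<cdot> pB, (B, b)) \<in> hom (Lcat X) (P, e) (B, b)"
    using restricted_total_in_hom_Lcat[OF pB b comp_in_hom[OF pA(1) a_hom]] e_swap by simp
  moreover have "restriction_idem P e"
    unfolding e_def using pA(1) pB(1) a_hom b_hom by (rule restriction_idem_product_idem)
  ultimately show ?thesis
    unfolding product_def Ball_def split_paired_All Obj_Lcat_iff e_def
    using product_Lcat_pairing[OF P a_hom b_hom] by simp
qed

lemma local_product_Lcat_of_restriction_product:
  assumes P: "restriction_product X A B P pA pB"
    and a: "restriction_idem A a" and b: "restriction_idem B b"
  defines "e \<equiv> product_idem pA pB a b"
  shows "local_product (Lcat X) (Lobj X) (Leta X) (A, a) (B, b) (P, e)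
    ((P, e), e \<cdot> pA, (A, a)) ((P, e), e \<cdot> pB, (B, b))"
proof -
  have pA: "pA \<in> hom X P A" "R pA = idm X P" and pB: "pB \<in> hom X P B" "R pB = idm X P"
    using P total_iff unfolding restriction_product_def by blast+
  have A: "A \<in> Obj X" and B: "B \<in> Obj X"
    using hom_cod_in_Obj pA(1) pB(1) by blast+
  have product: "product (Lcat X) (A, a) (B, b) (P, e) ((P, e), e \<cdot> pA, (A, a)) ((P, e), e \<cdot> pB, (B, b))"
    unfolding e_def using P a b by (rule product_Lcat_of_restriction_product)
  have total_product: "product (Lcat X) (A, idm X A) (B, idm X B) (P, idm X P)
      ((P, idm X P), pA, (A, idm X A)) ((P, idm X P), pB, (B, idm X B))"
    using product_Lcat_of_restriction_product[OF P restriction_idem_idm[OF A] restriction_idem_idm[OF B]]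
      product_idem_idm[OF pA pB] comp_idm_left pA(1) pB(1) by simp
  have "e \<cdot> pA \<cdot> a = e \<cdot> pA" "e \<cdot> pB \<cdot> b = e \<cdot> pB"
    using product unfolding product_def hom_Lcat_iff by blast+
  then have
    "cmp (Lcat X) (Leta X (P, e)) ((P, idm X P), pA, (A, idm X A)) =
      cmp (Lcat X) ((P, e), e \<cdot> pA, (A, a)) (Leta X (A, a))"
    "cmp (Lcat X) (Leta X (P, e)) ((P, idm X P), pB, (B, idm X B)) =
      cmp (Lcat X) ((P, e), e \<cdot> pB, (B, b)) (Leta X (B, b))"
    by simp_all
  then show ?thesis
    unfolding local_product_def Lobj_Pair using product total_product by blast
qed

lemma restriction_product_of_product_Lcat:
  assumes product: "product (Lcat X) (A, idm X A) (B, idm X B) (P, idm X P)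
      ((P, idm X P), pA, (A, idm X A)) ((P, idm X P), pB, (B, idm X B))"
  shows "restriction_product X A B P pA pB"
proof -
  have pA: "pA \<in> hom X P A" "R pA = idm X P" and pB: "pB \<in> hom X P B" "R pB = idm X P"
    using product unfolding product_def hom_Lcat_iff by blast+
  have P: "P \<in> Obj X" and A: "A \<in> Obj X" and B: "B \<in> Obj X"
    using pA(1) pB(1) hom_dom_in_Obj hom_cod_in_Obj by blast+
  have univ: "\<forall>Z \<in> Obj (Lcat X). \<forall>u \<in> hom (Lcat X) Z (A, idm X A). \<forall>v \<in> hom (Lcat X) Z (B, idm X B).
      \<exists>!k. k \<in> hom (Lcat X) Z (P, idm X P) \<and>
        cmp (Lcat X) k ((P, idm X P), pA, (A, idm X A)) = u \<and>
        cmp (Lcat X) k ((P, idm X P), pB, (B, idm X B)) = v"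
    using product unfolding product_def by blast
  have "\<exists>!h. h \<in> hom X C P \<and> h \<cdot> pA = R g \<cdot> f \<and> h \<cdot> pB = R f \<cdot> g"
    if f: "f \<in> hom X C A" and g: "g \<in> hom X C B" for C f g
  proof -
    define c where "c = R g \<cdot> R f"
    have f': "R g \<cdot> f \<in> hom X C A" and g': "R f \<cdot> g \<in> hom X C B"
      using comp_in_hom rst_in_hom f g by blast+
    have Rf': "R (R g \<cdot> f) = c" and Rg': "R (R f \<cdot> g) = c"
      unfolding c_def using rst_rst_comp[OF f g] rst_rst_comp[OF g f] rst_commute[OF f g] by simp_all
    have "(C, c) \<in> Obj (Lcat X)"
      using restriction_idem_rst[OF f'] Rf' by (simp add: Obj_Lcat_iff)
    moreover have "((C, c), R g \<cdot> f, (A, idm X A)) \<in> hom (Lcat X) (C, c) (A, idm X A)"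
      using f' Rf' by (simp add: hom_Lcat_total_cod_iff[OF A])
    moreover have "((C, c), R f \<cdot> g, (B, idm X B)) \<in> hom (Lcat X) (C, c) (B, idm X B)"
      using g' Rg' by (simp add: hom_Lcat_total_cod_iff[OF B])
    ultimately have "\<exists>!k. k \<in> hom (Lcat X) (C, c) (P, idm X P) \<and>
        cmp (Lcat X) k ((P, idm X P), pA, (A, idm X A)) = ((C, c), R g \<cdot> f, (A, idm X A)) \<and>
        cmp (Lcat X) k ((P, idm X P), pB, (B, idm X B)) = ((C, c), R f \<cdot> g, (B, idm X B))"
      using univ by blast
    then have "\<exists>!h. h \<in> hom X C P \<and> R h = c \<and> h \<cdot> pA = R g \<cdot> f \<and> h \<cdot> pB = R f \<cdot> g"
      unfolding ex1_hom_Lcat_total_cod_iff[OF P] by simp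
    moreover have "R h = c" if "h \<in> hom X C P" "h \<cdot> pA = R g \<cdot> f" for h
      using rst_comp_total[OF that(1) pA] that(2) Rf' by simp
    ultimately show ?thesis
      by blast
  qed
  then show ?thesis
    unfolding restriction_product_def using P pA pB total_iff by blast
qed

lemma has_restriction_products_iff_has_local_products:
  "has_restriction_products X \<longleftrightarrow> has_local_products (Lcat X) (Lobj X) (Leta X)"
proof
  assume products: "has_restriction_products X"
  have "\<exists>Q p1 p2. local_product (Lcat X) (Lobj X) (Leta X) M N Q p1 p2"
    if MN: "M \<in> Obj (Lcat X)" "N \<in> Obj (Lcat X)" for M N
  proof -
    obtain A a B b where "M = (A, a)" "N = (B, b)" and a: "restriction_idem A a" and b: "restriction_idem B b"
      using MN by (cases M, cases N) (simp add: Obj_Lcat_iff)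
    moreover obtain P pA pB where "restriction_product X A B P pA pB"
      using products a b hom_dom_in_Obj unfolding has_restriction_products_def restriction_idem_def
      by blast
    ultimately show ?thesis
      using local_product_Lcat_of_restriction_product by blast
  qed
  then show "has_local_products (Lcat X) (Lobj X) (Leta X)"
    unfolding has_local_products_def by blast
next
  assume local_products: "has_local_products (Lcat X) (Lobj X) (Leta X)"
  have "\<exists>P pA pB. restriction_product X A B P pA pB" if A: "A \<in> Obj X" and B: "B \<in> Obj X" for A B
  proof -
    obtain Q p1 p2 where "local_product (Lcat X) (Lobj X) (Leta X) (A, idm X A) (B, idm X B) Q p1 p2"
      using local_products restriction_idem_idm[OF A, folded Obj_Lcat_iff]
        restriction_idem_idm[OF B, folded Obj_Lcat_iff]
      unfolding has_local_products_def by blast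
    moreover obtain P e where "Q = (P, e)"
      by fastforce
    ultimately obtain q1 q2 where product: "product (Lcat X) (A, idm X A) (B, idm X B) (P, idm X P) q1 q2"
      unfolding local_product_def by auto
    moreover obtain pA pB where
      "q1 = ((P, idm X P), pA, (A, idm X A))" "q2 = ((P, idm X P), pB, (B, idm X B))"
      using product unfolding product_def hom_Lcat_iff by blast
    ultimately show ?thesis
      using restriction_product_of_product_Lcat by blast
  qed
  then show "has_restriction_products X"
    unfolding has_restriction_products_def by blast
qed

end

theorem proposition6p8:
  fixes X :: "('o, 'm) rcat"
  assumes "restriction_category X"
  shows "(has_restriction_terminal X \<longleftrightarrow> has_local_terminal (Lcat X) (Lobj X) (Leta X)) \<and>
         (has_restriction_products X \<longleftrightarrow> has_local_products (Lcat X) (Lobj X) (Leta X))"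
proof -
  interpret restriction_cat X
    using assms by (rule restriction_cat.intro)
  show ?thesis
    using has_restriction_terminal_iff_has_local_terminal
      has_restriction_products_iff_has_local_products by blast
qed

end
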